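(* Let $A=A_s+A_d\epsilon\in\mathbb{D}^{m\times n}$. Then the DMPGI of the essential part $A_e$ exists and $$A^G=A_e^D.$$ In particular, if all nonzero singular values of $A$ are appreciable, then the DMPGI $A^D$ exists and $A^D=A^G$; otherwise $A^D$ does not exist and $A^G$ is the DMPGI of $A_e$.
   Context: A dual real number is $a=a_s+a_d\epsilon$ with $a_s,a_d\in\mathbb R$, $\epsilon\neq0$, $\epsilon^2=0$; appreciable if $a_s\neq0$, infinitesimal otherwise; ordered by $a>b$ iff $a_s>b_s$, or $a_s=b_s$ and $a_d>b_d$. A dual real matrix is $A=A_s+A_d\epsilon$ with real $A_s,A_d$; $A^\top=A_s^\top+A_d^\top\epsilon$; orthogonal means $U^\top U=UU^\top=I$. Every $A\in\mathbb{D}^{m\times n}$ has an SVD $A=U\Sigma V^\top$ with $U,V$ orthogonal dual real matrices and $\Sigma$ diagonal with entries $\mu_1\ge\dots\ge\mu_r$ positive appreciable, $\mu_{r+1}\ge\dots\ge\mu_t$ positive infinitesimal, and zeros (unique). The essential part is $A_e=U\begin{bmatrix}\mathrm{diag}(\mu_1,\dots,\mu_r)&O\\O&O\end{bmatrix}V^\top$. The GMPI $A^G$ is the unique $X$ with $AXA=A_e$, $XAX=X$, $(AX)^\top=AX$, $(XA)^\top=XA$. The DMPGI $A^D$ of a dual real matrix $B$ is a matrix $X$ satisfying $BXB=B$, $XBX=X$, $(BX)^\top=BX$, $(XB)^\top=XB$ (when it exists). *)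

theory Defs
  imports "Jordan_Normal_Form.Matrix"
begin

text \<open>Dual real numbers a = a_s + a_d eps are represented as pairs (a_s, a_d).
  Dual real m x n matrices A = A_s + A_d eps are represented as pairs (A_s, A_d)
  of real m x n matrices.\<close>

type_synonym dual = "real \<times> real"
type_synonym dmat = "real mat \<times> real mat"

definition dual_le :: "dual \<Rightarrow> dual \<Rightarrow> bool" where
  "dual_le a b \<longleftrightarrow> fst a < fst b \<or> (fst a = fst b \<and> snd a \<le> snd b)"

definition dcarrier :: "nat \<Rightarrow> nat \<Rightarrow> dmat set" where
  "dcarrier m n = {A. fst A \<in> carrier_mat m n \<and> snd A \<in> carrier_mat m n}"

definition dmult :: "dmat \<Rightarrow> dmat \<Rightarrow> dmat" where
  "dmult A B = (fst A * fst B, fst A * snd B + snd A * fst B)"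

definition dtrans :: "dmat \<Rightarrow> dmat" where
  "dtrans A = (transpose_mat (fst A), transpose_mat (snd A))"

definition dident :: "nat \<Rightarrow> dmat" where
  "dident k = (1\<^sub>m k, 0\<^sub>m k k)"

definition dentry :: "dmat \<Rightarrow> nat \<Rightarrow> nat \<Rightarrow> dual" where
  "dentry A i j = (fst A $$ (i, j), snd A $$ (i, j))"

definition dorthogonal :: "nat \<Rightarrow> dmat \<Rightarrow> bool" where
  "dorthogonal k U \<longleftrightarrow> U \<in> dcarrier k k \<and>
     dmult (dtrans U) U = dident k \<and> dmult U (dtrans U) = dident k"

text \<open>SVD A = U S V^T: S diagonal with entries non-increasing (dual order) and
  nonnegative, i.e. positive appreciable ones, then positive infinitesimal ones, then zeros.\<close>
definition dsvd :: "nat \<Rightarrow> nat \<Rightarrow> dmat \<Rightarrow> dmat \<Rightarrow> dmat \<Rightarrow> dmat \<Rightarrow> bool" where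
  "dsvd m n A U S V \<longleftrightarrow>
     A \<in> dcarrier m n \<and> dorthogonal m U \<and> dorthogonal n V \<and> S \<in> dcarrier m n \<and>
     (\<forall>i<m. \<forall>j<n. i \<noteq> j \<longrightarrow> dentry S i j = (0, 0)) \<and>
     (\<forall>i<min m n. dual_le (0, 0) (dentry S i i)) \<and>
     (\<forall>i j. i \<le> j \<and> j < min m n \<longrightarrow> dual_le (dentry S j j) (dentry S i i)) \<and>
     A = dmult (dmult U S) (dtrans V)"

definition app_part :: "nat \<Rightarrow> nat \<Rightarrow> dmat \<Rightarrow> dmat" where
  "app_part m n S = (mat m n (\<lambda>(i, j). fst S $$ (i, j)),
                     mat m n (\<lambda>(i, j). if fst S $$ (i, j) \<noteq> 0 then snd S $$ (i, j) else 0))"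

definition ess_part :: "nat \<Rightarrow> nat \<Rightarrow> dmat \<Rightarrow> dmat \<Rightarrow> dmat \<Rightarrow> dmat" where
  "ess_part m n U S V = dmult (dmult U (app_part m n S)) (dtrans V)"

definition is_DMPGI :: "nat \<Rightarrow> nat \<Rightarrow> dmat \<Rightarrow> dmat \<Rightarrow> bool" where
  "is_DMPGI m n B X \<longleftrightarrow> X \<in> dcarrier n m \<and>
     dmult (dmult B X) B = B \<and> dmult (dmult X B) X = X \<and>
     dtrans (dmult B X) = dmult B X \<and> dtrans (dmult X B) = dmult X B"

definition is_GMPI :: "nat \<Rightarrow> nat \<Rightarrow> dmat \<Rightarrow> dmat \<Rightarrow> dmat \<Rightarrow> bool" where
  "is_GMPI m n A Ae X \<longleftrightarrow> X \<in> dcarrier n m \<and>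
     dmult (dmult A X) A = Ae \<and> dmult (dmult X A) X = X \<and>
     dtrans (dmult A X) = dmult A X \<and> dtrans (dmult X A) = dmult X A"

end

theory Submission
  imports Defs
begin

text \<open>Both the GMPI equations of \<open>A\<close> and the Moore--Penrose equations of \<open>A\<^sub>e\<close> are instances of
  \<open>M X M = N, X M X = X\<close> with symmetric \<open>M X\<close>, \<open>X M\<close>, and these equations are invariant under
  orthogonal equivalence \<open>M \<mapsto> U M V\<^sup>T\<close>, \<open>X \<mapsto> V X U\<^sup>T\<close>.  So with \<open>A = U S V\<^sup>T\<close> everything reduces to the
  diagonal factor \<open>S\<close>, where the equations decouple entrywise.  For diagonal entries
  \<open>s\<^sub>i = a\<^sub>i + b\<^sub>i \<epsilon>\<close> and right-hand side the appreciable part of \<open>S\<close>, the unique solution is the diagonal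
  matrix with entries \<open>1/a\<^sub>i - (b\<^sub>i/a\<^sub>i\<^sup>2) \<epsilon>\<close> where \<open>a\<^sub>i \<noteq> 0\<close> and \<open>0\<close> elsewhere; it depends only on the
  appreciable part, so the same matrix solves the equations of \<open>A\<^sub>e\<close>.  If some \<open>s\<^sub>k = b\<^sub>k \<epsilon>\<close> is a
  nonzero infinitesimal, the \<open>(k,k)\<close> entry of \<open>S Y S\<close> is \<open>0\<close> for every \<open>Y\<close>, so \<open>A\<close> has no DMPGI.\<close>

section \<open>Dual matrix algebra\<close>

lemma dcarrier_dims:
  "A \<in> dcarrier m n \<Longrightarrow>
     dim_row (fst A) = m \<and> dim_col (fst A) = n \<and> dim_row (snd A) = m \<and> dim_col (snd A) = n"
  by (auto simp: dcarrier_def)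

lemma dmult_carrier [intro]: "A \<in> dcarrier m n \<Longrightarrow> B \<in> dcarrier n p \<Longrightarrow> dmult A B \<in> dcarrier m p"
  by (auto simp: dcarrier_def dmult_def)

lemma dtrans_carrier [intro]: "A \<in> dcarrier m n \<Longrightarrow> dtrans A \<in> dcarrier n m"
  by (auto simp: dcarrier_def dtrans_def)

lemma dtrans_dtrans [simp]: "dtrans (dtrans A) = A"
  by (simp add: dtrans_def)

lemma dmult_dident_left: "A \<in> dcarrier m n \<Longrightarrow> dmult (dident m) A = A"
  by (cases A) (auto simp: dmult_def dident_def dcarrier_def)

lemma dmult_dident_right: "A \<in> dcarrier m n \<Longrightarrow> dmult A (dident n) = A"
  by (cases A) (auto simp: dmult_def dident_def dcarrier_def)

lemma dmult_assoc:
  assumes "A \<in> dcarrier m n" "B \<in> dcarrier n p" "C \<in> dcarrier p q"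
  shows "dmult (dmult A B) C = dmult A (dmult B C)"
proof -
  obtain A1 A2 B1 B2 C1 C2 where ABC: "A = (A1, A2)" "B = (B1, B2)" "C = (C1, C2)"
    by (metis prod.exhaust)
  have c: "A1 \<in> carrier_mat m n" "A2 \<in> carrier_mat m n" "B1 \<in> carrier_mat n p"
    "B2 \<in> carrier_mat n p" "C1 \<in> carrier_mat p q" "C2 \<in> carrier_mat p q"
    using assms ABC by (auto simp: dcarrier_def)
  have "(A1 * B2 + A2 * B1) * C1 = A1 * B2 * C1 + A2 * B1 * C1"
    using c by (meson add_mult_distrib_mat mult_carrier_mat)
  moreover have "A1 * (B1 * C2 + B2 * C1) = A1 * (B1 * C2) + A1 * (B2 * C1)"
    using c by (meson mult_add_distrib_mat mult_carrier_mat)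
  ultimately have "A1 * B1 * C2 + (A1 * B2 + A2 * B1) * C1 = A1 * (B1 * C2 + B2 * C1) + A2 * (B1 * C1)"
    using c by (simp add: assoc_mult_mat[of _ m n _ p _ q] assoc_add_mat[of _ m q])
  then show ?thesis
    using ABC c by (simp add: dmult_def assoc_mult_mat[of _ m n _ p _ q])
qed

text \<open>A form of associativity whose side conditions the simplifier can discharge.\<close>

lemma dmult_assoc_dims:
  assumes "dim_row (snd A) = dim_row (fst A)" "dim_col (snd A) = dim_col (fst A)"
    "dim_row (snd B) = dim_row (fst B)" "dim_col (snd B) = dim_col (fst B)"
    "dim_row (snd C) = dim_row (fst C)" "dim_col (snd C) = dim_col (fst C)"
    "dim_col (fst A) = dim_row (fst B)" "dim_col (fst B) = dim_row (fst C)"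
  shows "dmult (dmult A B) C = dmult A (dmult B C)"
proof -
  have "A \<in> dcarrier (dim_row (fst A)) (dim_col (fst A))"
    "B \<in> dcarrier (dim_col (fst A)) (dim_col (fst B))"
    "C \<in> dcarrier (dim_col (fst B)) (dim_col (fst C))"
    using assms unfolding dcarrier_def carrier_mat_def by simp_all
  then show ?thesis by (rule dmult_assoc)
qed

lemma dims_dmult [simp]:
  "dim_row (fst (dmult A B)) = dim_row (fst A)" "dim_col (fst (dmult A B)) = dim_col (fst B)"
  "dim_row (snd (dmult A B)) = dim_row (snd A)" "dim_col (snd (dmult A B)) = dim_col (fst B)"
  by (simp_all add: dmult_def)

lemma dims_dtrans [simp]:
  "dim_row (fst (dtrans A)) = dim_col (fst A)" "dim_col (fst (dtrans A)) = dim_row (fst A)"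
  "dim_row (snd (dtrans A)) = dim_col (snd A)" "dim_col (snd (dtrans A)) = dim_row (snd A)"
  by (simp_all add: dtrans_def)

lemmas dmult_normalize = dmult_assoc_dims dims_dmult dims_dtrans

lemma dtrans_dmult:
  assumes "A \<in> dcarrier m n" "B \<in> dcarrier n p"
  shows "dtrans (dmult A B) = dmult (dtrans B) (dtrans A)"
proof -
  obtain A1 A2 B1 B2 where AB: "A = (A1, A2)" "B = (B1, B2)"
    by (metis prod.exhaust)
  have c: "A1 \<in> carrier_mat m n" "A2 \<in> carrier_mat m n" "B1 \<in> carrier_mat n p" "B2 \<in> carrier_mat n p"
    using assms AB by (auto simp: dcarrier_def)
  have "transpose_mat (A1 * B2 + A2 * B1)
      = transpose_mat B2 * transpose_mat A1 + transpose_mat B1 * transpose_mat A2"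
    using c by (simp add: transpose_add[of _ m p] transpose_mult[of _ m n])
  also have "\<dots> = transpose_mat B1 * transpose_mat A2 + transpose_mat B2 * transpose_mat A1"
    using c by (meson comm_add_mat mult_carrier_mat transpose_carrier_mat)
  finally show ?thesis
    using AB c by (simp add: dtrans_def dmult_def transpose_mult[of _ m n])
qed

lemma dtrans_orth_conj:
  assumes U: "U \<in> dcarrier p q" and Z: "Z \<in> dcarrier q q"
  shows "dtrans (dmult (dmult U Z) (dtrans U)) = dmult (dmult U (dtrans Z)) (dtrans U)"
proof -
  have "dtrans (dmult (dmult U Z) (dtrans U)) = dmult U (dmult (dtrans Z) (dtrans U))"
    using dtrans_dmult[OF dmult_carrier[OF U Z] dtrans_carrier[OF U]] dtrans_dmult[OF U Z] by simp
  also have "\<dots> = dmult (dmult U (dtrans Z)) (dtrans U)"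
    using dmult_assoc[OF U dtrans_carrier[OF Z] dtrans_carrier[OF U]] by simp
  finally show ?thesis .
qed

section \<open>Orthogonal equivalence\<close>

lemma dorthogonal_carrier: "dorthogonal k U \<Longrightarrow> U \<in> dcarrier k k"
  by (simp add: dorthogonal_def)

lemma dorthogonal_dtrans: "dorthogonal k U \<Longrightarrow> dorthogonal k (dtrans U)"
  by (auto simp: dorthogonal_def)

lemma dorthogonal_cancel_left:
  assumes U: "dorthogonal p U" and Z: "Z \<in> dcarrier p k"
  shows "dmult (dtrans U) (dmult U Z) = Z" "dmult U (dmult (dtrans U) Z) = Z"
proof -
  have "U \<in> dcarrier p p" "dtrans U \<in> dcarrier p p"
    using U by (auto simp: dorthogonal_def)
  then show "dmult (dtrans U) (dmult U Z) = Z" "dmult U (dmult (dtrans U) Z) = Z"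
    using U Z dmult_assoc[of "dtrans U" p p U p Z k] dmult_assoc[of U p p "dtrans U" p Z k]
    by (simp_all add: dorthogonal_def dmult_dident_left)
qed

lemma dorthogonal_cancel_right:
  assumes U: "dorthogonal p U" and Z: "Z \<in> dcarrier k p"
  shows "dmult (dmult Z (dtrans U)) U = Z" "dmult (dmult Z U) (dtrans U) = Z"
proof -
  have "U \<in> dcarrier p p" "dtrans U \<in> dcarrier p p"
    using U by (auto simp: dorthogonal_def)
  then show "dmult (dmult Z (dtrans U)) U = Z" "dmult (dmult Z U) (dtrans U) = Z"
    using U Z dmult_assoc[of Z k p "dtrans U" p U p] dmult_assoc[of Z k p U p "dtrans U" p]
    by (simp_all add: dorthogonal_def dmult_dident_right)
qed

lemma dorthogonal_cancel_left_dims: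
  assumes "dorthogonal p U" "dim_row (fst Z) = p" "dim_row (snd Z) = p"
    "dim_col (snd Z) = dim_col (fst Z)"
  shows "dmult (dtrans U) (dmult U Z) = Z" "dmult U (dmult (dtrans U) Z) = Z"
  using dorthogonal_cancel_left[OF assms(1), of Z "dim_col (fst Z)"] assms
  by (auto simp: dcarrier_def)

lemma dorth_equiv_cancel:
  assumes U: "dorthogonal m U" and V: "dorthogonal n V" and X: "X \<in> dcarrier n m"
  shows "dmult (dmult V (dmult (dmult (dtrans V) X) U)) (dtrans U) = X"
proof -
  have "dmult (dmult V (dmult (dmult (dtrans V) X) U)) (dtrans U)
      = dmult V (dmult (dtrans V) (dmult (dmult X U) (dtrans U)))"
    using dcarrier_dims[OF dorthogonal_carrier[OF U]] dcarrier_dims[OF dorthogonal_carrier[OF V]]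
      dcarrier_dims[OF X]
    by (simp only: dmult_normalize simp_thms)
  also have "\<dots> = X"
    using dorthogonal_cancel_left(2)[OF V X] dorthogonal_cancel_right(2)[OF U X] by simp
  finally show ?thesis .
qed

lemma dorth_equiv_eq_iff:
  assumes U: "dorthogonal p U" and V: "dorthogonal q V"
    and Z: "Z \<in> dcarrier p q" and W: "W \<in> dcarrier p q"
  shows "dmult (dmult U Z) (dtrans V) = dmult (dmult U W) (dtrans V) \<longleftrightarrow> Z = W"
proof
  note cancel = dorth_equiv_cancel[OF dorthogonal_dtrans[OF V] dorthogonal_dtrans[OF U], unfolded dtrans_dtrans]
  assume "dmult (dmult U Z) (dtrans V) = dmult (dmult U W) (dtrans V)"
  then show "Z = W"
    using cancel[OF Z] cancel[OF W] by metis
qed simp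

section \<open>Penrose equations with a prescribed right-hand side\<close>

definition penrose_eqs :: "nat \<Rightarrow> nat \<Rightarrow> dmat \<Rightarrow> dmat \<Rightarrow> dmat \<Rightarrow> bool" where
  "penrose_eqs m n M N X \<longleftrightarrow> X \<in> dcarrier n m \<and>
     dmult (dmult M X) M = N \<and> dmult (dmult X M) X = X \<and>
     dtrans (dmult M X) = dmult M X \<and> dtrans (dmult X M) = dmult X M"

lemma is_DMPGI_iff_penrose_eqs: "is_DMPGI m n B X \<longleftrightarrow> penrose_eqs m n B B X"
  by (simp add: is_DMPGI_def penrose_eqs_def)

lemma is_GMPI_iff_penrose_eqs: "is_GMPI m n A Ae X \<longleftrightarrow> penrose_eqs m n A Ae X"
  by (simp add: is_GMPI_def penrose_eqs_def)

lemma penrose_eqs_dorth_equiv: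
  assumes U: "dorthogonal m U" and V: "dorthogonal n V"
    and M: "M \<in> dcarrier m n" and N: "N \<in> dcarrier m n" and X: "X \<in> dcarrier n m"
  shows "penrose_eqs m n (dmult (dmult U M) (dtrans V)) (dmult (dmult U N) (dtrans V)) X
     \<longleftrightarrow> penrose_eqs m n M N (dmult (dmult (dtrans V) X) U)"
proof -
  have Uc: "U \<in> dcarrier m m" and Vc: "V \<in> dcarrier n n"
    using U V by (simp_all add: dorthogonal_carrier)
  define Y where "Y = dmult (dmult (dtrans V) X) U"
  have Yc: "Y \<in> dcarrier n m" unfolding Y_def using Vc X Uc by blast
  have XY: "X = dmult (dmult V Y) (dtrans U)"
    unfolding Y_def using dorth_equiv_cancel[OF U V X] by simp
  note dims = dcarrier_dims[OF Uc] dcarrier_dims[OF Vc] dcarrier_dims[OF M] dcarrier_dims[OF X]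
    dcarrier_dims[OF Yc]
  note normalize = dmult_normalize simp_thms dorthogonal_cancel_left_dims[OF U]
    dorthogonal_cancel_left_dims[OF V]
  have MY: "dmult M Y \<in> dcarrier m m" "dmult Y M \<in> dcarrier n n"
     "dmult (dmult M Y) M \<in> dcarrier m n" "dmult (dmult Y M) Y \<in> dcarrier n m"
    using M Yc by blast+
  have "dmult (dmult (dmult (dmult U M) (dtrans V)) X) (dmult (dmult U M) (dtrans V))
      = dmult (dmult U (dmult (dmult M Y) M)) (dtrans V)"
    unfolding Y_def using dims by (simp only: normalize)
  moreover have "dmult (dmult X (dmult (dmult U M) (dtrans V))) X
      = dmult (dmult V (dmult (dmult Y M) Y)) (dtrans U)"
    by (subst (1 2) XY) (use dims in \<open>simp only: normalize\<close>)
  moreover have "dmult (dmult (dmult U M) (dtrans V)) X = dmult (dmult U (dmult M Y)) (dtrans U)"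
    by (subst XY) (use dims in \<open>simp only: normalize\<close>)
  moreover have "dmult X (dmult (dmult U M) (dtrans V)) = dmult (dmult V (dmult Y M)) (dtrans V)"
    by (subst XY) (use dims in \<open>simp only: normalize\<close>)
  ultimately show ?thesis
    unfolding penrose_eqs_def Y_def[symmetric]
    using X Yc dorth_equiv_eq_iff[OF U V MY(3) N] dorth_equiv_eq_iff[OF V U MY(4) Yc, folded XY]
      dorth_equiv_eq_iff[OF U U dtrans_carrier[OF MY(1)] MY(1)]
      dorth_equiv_eq_iff[OF V V dtrans_carrier[OF MY(2)] MY(2)]
      dtrans_orth_conj[OF Uc MY(1)] dtrans_orth_conj[OF Vc MY(2)]
    by simp
qed

lemma penrose_eqs_dorth_equiv_unique:
  assumes U: "dorthogonal m U" and V: "dorthogonal n V"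
    and M: "M \<in> dcarrier m n" and N: "N \<in> dcarrier m n" and Y0: "Y0 \<in> dcarrier n m"
    and unique: "\<And>Y. Y \<in> dcarrier n m \<Longrightarrow> penrose_eqs m n M N Y \<longleftrightarrow> Y = Y0"
  shows "penrose_eqs m n (dmult (dmult U M) (dtrans V)) (dmult (dmult U N) (dtrans V)) X
     \<longleftrightarrow> X = dmult (dmult V Y0) (dtrans U)"
proof (cases "X \<in> dcarrier n m")
  case True
  have Uc: "U \<in> dcarrier m m" and Vc: "V \<in> dcarrier n n"
    using U V by (simp_all add: dorthogonal_carrier)
  have "penrose_eqs m n (dmult (dmult U M) (dtrans V)) (dmult (dmult U N) (dtrans V)) X
      \<longleftrightarrow> dmult (dmult (dtrans V) X) U = Y0"
    using penrose_eqs_dorth_equiv[OF U V M N True] unique[of "dmult (dmult (dtrans V) X) U"]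
      Vc True Uc by blast
  also have "\<dots> \<longleftrightarrow> X = dmult (dmult V Y0) (dtrans U)"
    using dorth_equiv_cancel[OF U V True]
      dorth_equiv_cancel[OF dorthogonal_dtrans[OF U] dorthogonal_dtrans[OF V] Y0]
    by auto
  finally show ?thesis .
next
  case False
  moreover have "dmult (dmult V Y0) (dtrans U) \<in> dcarrier n m"
    using U V Y0 by (blast intro: dorthogonal_carrier)
  ultimately show ?thesis by (auto simp: penrose_eqs_def)
qed

lemma index_mult_mat_sum:
  assumes "A \<in> carrier_mat p n" "B \<in> carrier_mat n q" "i < p" "j < q"
  shows "(A * B) $$ (i, j) = (\<Sum>k<n. A $$ (i, k) * B $$ (k, j))"
  using assms by (simp add: scalar_prod_def atLeast0LessThan)

lemma mat_eq_iff_entrywise: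
  assumes "A \<in> carrier_mat r c" "B \<in> carrier_mat r c"
    and "\<And>i j. i < r \<Longrightarrow> j < c \<Longrightarrow> A $$ (i, j) = B $$ (i, j) \<longleftrightarrow> \<Phi> i j"
  shows "A = B \<longleftrightarrow> (\<forall>i<r. \<forall>j<c. \<Phi> i j)"
  using assms by (auto intro!: eq_matI)

lemma transpose_eq_iff_entrywise:
  assumes "A \<in> carrier_mat r r"
    and "\<And>i j. i < r \<Longrightarrow> j < r \<Longrightarrow> A $$ (j, i) = A $$ (i, j) \<longleftrightarrow> \<Phi> i j"
  shows "transpose_mat A = A \<longleftrightarrow> (\<forall>i<r. \<forall>j<r. \<Phi> i j)"
  by (rule mat_eq_iff_entrywise) (use assms in auto)

definition diag_entry :: "nat \<Rightarrow> nat \<Rightarrow> 'a :: zero mat \<Rightarrow> nat \<Rightarrow> 'a" where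
  "diag_entry m n M i = (if i < min m n then M $$ (i, i) else 0)"

lemma diag_entry_nonzeroD: "diag_entry m n M i \<noteq> 0 \<Longrightarrow> i < m \<and> i < n"
  by (auto simp: diag_entry_def split: if_splits)

lemma index_mult_diag_left:
  fixes M N :: "'a :: semiring_0 mat"
  assumes M: "M \<in> carrier_mat m n" and diag: "\<forall>i<m. \<forall>j<n. i \<noteq> j \<longrightarrow> M $$ (i, j) = 0"
    and N: "N \<in> carrier_mat n p" and ij: "i < m" "j < p"
  shows "(M * N) $$ (i, j) = diag_entry m n M i * N $$ (i, j)"
proof -
  have "(M * N) $$ (i, j) = (\<Sum>k<n. if k = i then M $$ (i, i) * N $$ (i, j) else 0)"
    unfolding index_mult_mat_sum[OF M N ij] by (rule sum.cong) (use diag ij in auto)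
  then show ?thesis
    using ij by (simp add: diag_entry_def)
qed

lemma index_mult_diag_right:
  fixes M N :: "'a :: semiring_0 mat"
  assumes M: "M \<in> carrier_mat m n" and diag: "\<forall>i<m. \<forall>j<n. i \<noteq> j \<longrightarrow> M $$ (i, j) = 0"
    and N: "N \<in> carrier_mat p m" and ij: "i < p" "j < n"
  shows "(N * M) $$ (i, j) = N $$ (i, j) * diag_entry m n M j"
proof -
  have "(N * M) $$ (i, j) = (\<Sum>k<m. if k = j then N $$ (i, j) * M $$ (j, j) else 0)"
    unfolding index_mult_mat_sum[OF N M ij] by (rule sum.cong) (use diag ij in auto)
  then show ?thesis
    using ij by (simp add: diag_entry_def)
qed

definition padded_entry :: "nat \<Rightarrow> nat \<Rightarrow> 'a :: zero mat \<Rightarrow> nat \<Rightarrow> nat \<Rightarrow> 'a" where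
  "padded_entry k l P i j = (if i < k \<and> j < l then P $$ (i, j) else 0)"

locale diag_dual_pair =
  fixes m n :: nat and Ss Sd P Q :: "real mat"
  assumes Ss: "Ss \<in> carrier_mat m n" and Sd: "Sd \<in> carrier_mat m n"
    and diag_s: "\<forall>i<m. \<forall>j<n. i \<noteq> j \<longrightarrow> Ss $$ (i, j) = 0"
    and diag_d: "\<forall>i<m. \<forall>j<n. i \<noteq> j \<longrightarrow> Sd $$ (i, j) = 0"
    and P: "P \<in> carrier_mat n m" and Q: "Q \<in> carrier_mat n m"
begin

abbreviation "a \<equiv> diag_entry m n Ss"
abbreviation "b \<equiv> diag_entry m n Sd"
abbreviation "p \<equiv> padded_entry n m P"
abbreviation "q \<equiv> padded_entry n m Q"

lemma diag_entries_SY: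
  assumes "i < m" "j < m"
  shows "(Ss * P) $$ (i, j) = a i * P $$ (i, j)"
    "(Ss * Q + Sd * P) $$ (i, j) = a i * Q $$ (i, j) + b i * P $$ (i, j)"
  using assms Ss Sd P Q index_mult_diag_left[OF Ss diag_s] index_mult_diag_left[OF Sd diag_d]
  by auto

lemma diag_entries_YS:
  assumes "i < n" "j < n"
  shows "(P * Ss) $$ (i, j) = P $$ (i, j) * a j"
    "(P * Sd + Q * Ss) $$ (i, j) = P $$ (i, j) * b j + Q $$ (i, j) * a j"
  using assms Ss Sd P Q index_mult_diag_right[OF Ss diag_s] index_mult_diag_right[OF Sd diag_d]
  by auto

lemma diag_entries_SYS:
  assumes ij: "i < m" "j < n"
  shows "(Ss * P * Ss) $$ (i, j) = a i * P $$ (i, j) * a j"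
    "(Ss * P * Sd + (Ss * Q + Sd * P) * Ss) $$ (i, j) =
       a i * P $$ (i, j) * b j + (a i * Q $$ (i, j) + b i * P $$ (i, j)) * a j"
proof -
  have SY: "Ss * P \<in> carrier_mat m m" "Ss * Q + Sd * P \<in> carrier_mat m m"
    using Ss Sd P Q by auto
  have out: "a j = 0" "b j = 0" if "\<not> j < m"
    using that by (simp_all add: diag_entry_def)
  show "(Ss * P * Ss) $$ (i, j) = a i * P $$ (i, j) * a j"
    using index_mult_diag_right[OF Ss diag_s SY(1) ij] diag_entries_SY ij out
    by (cases "j < m") auto
  show "(Ss * P * Sd + (Ss * Q + Sd * P) * Ss) $$ (i, j) =
       a i * P $$ (i, j) * b j + (a i * Q $$ (i, j) + b i * P $$ (i, j)) * a j"
    using index_mult_diag_right[OF Ss diag_s SY(2) ij] index_mult_diag_right[OF Sd diag_d SY(1) ij]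
      diag_entries_SY ij out SY Ss Sd
    by (cases "j < m") auto
qed

lemma diag_entries_YSY:
  assumes ij: "i < n" "j < m"
  shows "(P * Ss * P) $$ (i, j) = (\<Sum>k<n. P $$ (i, k) * a k * P $$ (k, j))"
    "(P * Ss * Q + (P * Sd + Q * Ss) * P) $$ (i, j) =
       (\<Sum>k<n. P $$ (i, k) * a k * Q $$ (k, j)
          + (P $$ (i, k) * b k + Q $$ (i, k) * a k) * P $$ (k, j))"
proof -
  have YS: "P * Ss \<in> carrier_mat n n" "P * Sd + Q * Ss \<in> carrier_mat n n"
    using Ss Sd P Q by auto
  show "(P * Ss * P) $$ (i, j) = (\<Sum>k<n. P $$ (i, k) * a k * P $$ (k, j))"
    using index_mult_mat_sum[OF YS(1) P ij] diag_entries_YS ij by simp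
  have "(P * Ss * Q + (P * Sd + Q * Ss) * P) $$ (i, j)
      = (\<Sum>k<n. P $$ (i, k) * a k * Q $$ (k, j))
        + (\<Sum>k<n. (P $$ (i, k) * b k + Q $$ (i, k) * a k) * P $$ (k, j))"
    using index_mult_mat_sum[OF YS(1) Q ij] index_mult_mat_sum[OF YS(2) P ij] diag_entries_YS
      ij YS P Q by simp
  then show "(P * Ss * Q + (P * Sd + Q * Ss) * P) $$ (i, j) =
       (\<Sum>k<n. P $$ (i, k) * a k * Q $$ (k, j)
          + (P $$ (i, k) * b k + Q $$ (i, k) * a k) * P $$ (k, j))"
    by (simp add: sum.distrib)
qed

end

section \<open>The scalar system for a diagonal factor\<close>

definition diag_pinv_s :: "(nat \<Rightarrow> 'a :: field) \<Rightarrow> nat \<Rightarrow> nat \<Rightarrow> 'a" where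
  "diag_pinv_s a i j = (if i = j \<and> a i \<noteq> 0 then 1 / a i else 0)"

definition diag_pinv_d :: "(nat \<Rightarrow> 'a :: field) \<Rightarrow> (nat \<Rightarrow> 'a) \<Rightarrow> nat \<Rightarrow> nat \<Rightarrow> 'a" where
  "diag_pinv_d a b i j = (if i = j \<and> a i \<noteq> 0 then - b i / (a i)\<^sup>2 else 0)"

lemma diag_pinv_d_cong: "(\<And>k. a k \<noteq> 0 \<Longrightarrow> b k = b' k) \<Longrightarrow> diag_pinv_d a b = diag_pinv_d a b'"
  by (auto simp: diag_pinv_d_def fun_eq_iff)

text \<open>The Penrose equations \<open>S Y S = S\<^sub>e\<close>, \<open>Y S Y = Y\<close>, \<open>(S Y)\<^sup>T = S Y\<close>, \<open>(Y S)\<^sup>T = Y S\<close>, split into standard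
  and dual parts, for \<open>S = diag a + diag b \<epsilon>\<close> and \<open>Y = p + q \<epsilon>\<close>, where \<open>S\<^sub>e\<close> keeps the entries with
  \<open>a i \<noteq> 0\<close>.  All index functions are extended by \<open>0\<close> outside the matrix bounds.\<close>

locale diag_penrose_solution =
  fixes m n :: nat and a b :: "nat \<Rightarrow> 'a :: field" and p q :: "nat \<Rightarrow> nat \<Rightarrow> 'a"
  assumes a_support: "\<And>k. a k \<noteq> 0 \<Longrightarrow> k < m \<and> k < n"
    and b_support: "\<And>k. b k \<noteq> 0 \<Longrightarrow> k < m \<and> k < n"
    and p_support: "\<And>i j. p i j \<noteq> 0 \<Longrightarrow> i < n \<and> j < m"
    and q_support: "\<And>i j. q i j \<noteq> 0 \<Longrightarrow> i < n \<and> j < m"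
    and outer_s: "\<And>i j. i < m \<Longrightarrow> j < n \<Longrightarrow> a i * p i j * a j = (if i = j then a i else 0)"
    and outer_d: "\<And>i j. i < m \<Longrightarrow> j < n \<Longrightarrow>
      a i * p i j * b j + (a i * q i j + b i * p i j) * a j = (if i = j \<and> a i \<noteq> 0 then b i else 0)"
    and inner_s: "\<And>i j. i < n \<Longrightarrow> j < m \<Longrightarrow> (\<Sum>k<n. p i k * a k * p k j) = p i j"
    and inner_d: "\<And>i j. i < n \<Longrightarrow> j < m \<Longrightarrow>
      (\<Sum>k<n. p i k * a k * q k j + (p i k * b k + q i k * a k) * p k j) = q i j"
    and left_sym_s: "\<And>i j. i < m \<Longrightarrow> j < m \<Longrightarrow> a j * p j i = a i * p i j"
    and left_sym_d: "\<And>i j. i < m \<Longrightarrow> j < m \<Longrightarrow>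
      a j * q j i + b j * p j i = a i * q i j + b i * p i j"
    and right_sym_s: "\<And>i j. i < n \<Longrightarrow> j < n \<Longrightarrow> p j i * a i = p i j * a j"
    and right_sym_d: "\<And>i j. i < n \<Longrightarrow> j < n \<Longrightarrow>
      p j i * b i + q j i * a i = p i j * b j + q i j * a j"
begin

lemma entries_zero_if_col_nonapp:
  assumes ai: "a i \<noteq> 0" and aj: "a j = 0"
  shows "p i j = 0 \<and> q i j = 0"
proof (cases "j < m")
  case True
  have i: "i < m" "i < n" using a_support ai by auto
  have p0: "p i j = 0" using left_sym_s[OF i(1) True] ai aj by auto
  have qb: "b j * p j i = a i * q i j" using left_sym_d[OF i(1) True] aj p0 by auto
  have "b j * p j i = 0"
  proof (cases "j < n")
    case True
    then show ?thesis using right_sym_s[OF i(2) True] ai aj p0 by auto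
  next
    case False
    then show ?thesis using b_support by force
  qed
  then show ?thesis using qb p0 ai by simp
next
  case False
  then show ?thesis using p_support q_support by fastforce
qed

lemma entries_zero_if_row_nonapp_col_app:
  assumes ai: "a i = 0" and aj: "a j \<noteq> 0"
  shows "p i j = 0 \<and> q i j = 0"
proof (cases "i < n")
  case True
  have j: "j < m" "j < n" using a_support aj by auto
  have p0: "p i j = 0" using right_sym_s[OF True j(2)] ai aj by auto
  have qb: "p j i * b i = q i j * a j" using right_sym_d[OF True j(2)] ai p0 by auto
  have "p j i * b i = 0"
  proof (cases "i < m")
    case True
    then show ?thesis using left_sym_s[OF True j(1)] ai aj p0 by auto
  next
    case False
    then show ?thesis using b_support by force
  qed
  then show ?thesis using qb p0 aj by simp
next
  case False
  then show ?thesis using p_support q_support by fastforce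
qed

lemma entries_zero_if_row_nonapp:
  assumes ai: "a i = 0"
  shows "p i j = 0 \<and> q i j = 0"
proof -
  have app_cols: "p i k * a k = 0 \<and> q i k * a k = 0" for k
    using entries_zero_if_row_nonapp_col_app[of i k] ai by (cases "a k = 0") auto
  have p_row: "p i k = 0" for k
    using inner_s[of i k] p_support[of i k] by (auto simp: app_cols)
  have "q i j = 0"
    using inner_d[of i j] q_support[of i j] by (auto simp: app_cols p_row)
  with p_row show ?thesis by simp
qed

lemma entries_if_both_app:
  assumes ai: "a i \<noteq> 0" and aj: "a j \<noteq> 0"
  shows "p i j = diag_pinv_s a i j \<and> q i j = diag_pinv_d a b i j"
proof -
  have ij: "i < m" "j < n" using a_support ai aj by auto
  note s = outer_s[OF ij] and d = outer_d[OF ij]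
  show ?thesis
  proof (cases "i = j")
    case True
    then have p: "a i * p i j = 1" using s ai by (simp add: field_simps)
    have "b i * (a i * p i j) + a i * a i * q i j + b i * (a i * p i j) = b i"
      using d True ai by (simp add: algebra_simps)
    then have "q i j * (a i)\<^sup>2 = - b i"
      unfolding p by (simp add: algebra_simps power2_eq_square eq_neg_iff_add_eq_0)
    then show ?thesis
      using p True ai by (simp add: diag_pinv_s_def diag_pinv_d_def field_simps)
  next
    case False
    then have "p i j = 0" using s ai aj by simp
    moreover from this have "q i j = 0" using d False ai aj by simp
    ultimately show ?thesis using False by (simp add: diag_pinv_s_def diag_pinv_d_def)
  qed
qed

lemma eq_diag_pinv: "p = diag_pinv_s a \<and> q = diag_pinv_d a b"
proof -
  have "p i j = diag_pinv_s a i j \<and> q i j = diag_pinv_d a b i j" for i j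
    using entries_if_both_app[of i j] entries_zero_if_col_nonapp[of i j]
      entries_zero_if_row_nonapp[of i j]
    by (cases "a i = 0"; cases "a j = 0") (auto simp: diag_pinv_s_def diag_pinv_d_def)
  then show ?thesis by auto
qed

end

lemma diag_penrose_solution_diag_pinv:
  assumes a_support: "\<And>k. a k \<noteq> 0 \<Longrightarrow> k < m \<and> k < n"
    and b_support: "\<And>k. b k \<noteq> 0 \<Longrightarrow> k < m \<and> k < n"
  shows "diag_penrose_solution m n a b (diag_pinv_s a) (diag_pinv_d a b)"
proof
  fix i j
  assume i: "i < n"
  have "(\<Sum>k<n. diag_pinv_s a i k * a k * diag_pinv_s a k j)
      = diag_pinv_s a i i * a i * diag_pinv_s a i j"
    using i by (subst sum.remove[of _ i]) (auto simp: diag_pinv_s_def intro!: sum.neutral)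
  then show "(\<Sum>k<n. diag_pinv_s a i k * a k * diag_pinv_s a k j) = diag_pinv_s a i j"
    by (simp add: diag_pinv_s_def)
  have "(\<Sum>k<n. diag_pinv_s a i k * a k * diag_pinv_d a b k j
        + (diag_pinv_s a i k * b k + diag_pinv_d a b i k * a k) * diag_pinv_s a k j)
      = diag_pinv_s a i i * a i * diag_pinv_d a b i j
        + (diag_pinv_s a i i * b i + diag_pinv_d a b i i * a i) * diag_pinv_s a i j"
    using i by (subst sum.remove[of _ i]) (auto simp: diag_pinv_s_def diag_pinv_d_def intro!: sum.neutral)
  then show "(\<Sum>k<n. diag_pinv_s a i k * a k * diag_pinv_d a b k j
        + (diag_pinv_s a i k * b k + diag_pinv_d a b i k * a k) * diag_pinv_s a k j)
      = diag_pinv_d a b i j"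
    by (auto simp: diag_pinv_s_def diag_pinv_d_def field_simps power2_eq_square)
qed (auto simp: diag_pinv_s_def diag_pinv_d_def field_simps power2_eq_square
    split: if_splits dest: a_support b_support)

lemma diag_penrose_solution_iff:
  assumes "\<And>k. a k \<noteq> 0 \<Longrightarrow> k < m \<and> k < n" "\<And>k. b k \<noteq> 0 \<Longrightarrow> k < m \<and> k < n"
    "\<And>i j. p i j \<noteq> 0 \<Longrightarrow> i < n \<and> j < m" "\<And>i j. q i j \<noteq> 0 \<Longrightarrow> i < n \<and> j < m"
  shows "diag_penrose_solution m n a b p q \<longleftrightarrow> p = diag_pinv_s a \<and> q = diag_pinv_d a b"
  using diag_penrose_solution.eq_diag_pinv diag_penrose_solution_diag_pinv[OF assms(1,2)] by blast

definition app_pinv :: "nat \<Rightarrow> nat \<Rightarrow> dmat \<Rightarrow> dmat" where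
  "app_pinv m n S =
     (mat n m (\<lambda>(i, j). diag_pinv_s (diag_entry m n (fst S)) i j),
      mat n m (\<lambda>(i, j). diag_pinv_d (diag_entry m n (fst S)) (diag_entry m n (snd S)) i j))"

context diag_dual_pair
begin

lemmas entries = diag_entries_SY diag_entries_YS diag_entries_SYS diag_entries_YSY

lemma entry_supports:
  "\<And>k. a k \<noteq> 0 \<Longrightarrow> k < m \<and> k < n" "\<And>k. b k \<noteq> 0 \<Longrightarrow> k < m \<and> k < n"
  "\<And>i j. p i j \<noteq> 0 \<Longrightarrow> i < n \<and> j < m" "\<And>i j. q i j \<noteq> 0 \<Longrightarrow> i < n \<and> j < m"
  by (auto simp: padded_entry_def dest: diag_entry_nonzeroD split: if_splits)

lemma outer_s_iff:
  "Ss * P * Ss = mat m n (\<lambda>(i, j). Ss $$ (i, j)) \<longleftrightarrow>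
     (\<forall>i<m. \<forall>j<n. a i * p i j * a j = (if i = j then a i else 0))"
  by (rule mat_eq_iff_entrywise)
    (use Ss P diag_s entries in \<open>auto simp: padded_entry_def diag_entry_def\<close>)

lemma outer_d_iff:
  "Ss * P * Sd + (Ss * Q + Sd * P) * Ss
       = mat m n (\<lambda>(i, j). if Ss $$ (i, j) \<noteq> 0 then Sd $$ (i, j) else 0) \<longleftrightarrow>
     (\<forall>i<m. \<forall>j<n. a i * p i j * b j + (a i * q i j + b i * p i j) * a j
        = (if i = j \<and> a i \<noteq> 0 then b i else 0))"
  by (rule mat_eq_iff_entrywise)
    (use Ss Sd P Q diag_s entries in \<open>auto simp: padded_entry_def diag_entry_def\<close>)

lemma inner_s_iff: "P * Ss * P = P \<longleftrightarrow> (\<forall>i<n. \<forall>j<m. (\<Sum>k<n. p i k * a k * p k j) = p i j)"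
proof (rule mat_eq_iff_entrywise)
  fix i j
  assume ij: "i < n" "j < m"
  have "(\<Sum>k<n. P $$ (i, k) * a k * P $$ (k, j)) = (\<Sum>k<n. p i k * a k * p k j)"
    by (rule sum.cong) (use ij in \<open>auto simp: padded_entry_def diag_entry_def\<close>)
  then show "(P * Ss * P) $$ (i, j) = P $$ (i, j) \<longleftrightarrow> (\<Sum>k<n. p i k * a k * p k j) = p i j"
    using entries ij by (simp add: padded_entry_def)
qed (use Ss P in auto)

lemma inner_d_iff:
  "P * Ss * Q + (P * Sd + Q * Ss) * P = Q \<longleftrightarrow>
     (\<forall>i<n. \<forall>j<m. (\<Sum>k<n. p i k * a k * q k j + (p i k * b k + q i k * a k) * p k j) = q i j)"
proof (rule mat_eq_iff_entrywise)
  fix i j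
  assume ij: "i < n" "j < m"
  have "(\<Sum>k<n. P $$ (i, k) * a k * Q $$ (k, j) + (P $$ (i, k) * b k + Q $$ (i, k) * a k) * P $$ (k, j))
      = (\<Sum>k<n. p i k * a k * q k j + (p i k * b k + q i k * a k) * p k j)"
    by (rule sum.cong) (use ij in \<open>auto simp: padded_entry_def diag_entry_def\<close>)
  then show "(P * Ss * Q + (P * Sd + Q * Ss) * P) $$ (i, j) = Q $$ (i, j) \<longleftrightarrow>
      (\<Sum>k<n. p i k * a k * q k j + (p i k * b k + q i k * a k) * p k j) = q i j"
    using entries ij by (simp add: padded_entry_def)
qed (use Ss Sd P Q in auto)

lemma left_sym_s_iff:
  "transpose_mat (Ss * P) = Ss * P \<longleftrightarrow> (\<forall>i<m. \<forall>j<m. a j * p j i = a i * p i j)"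
  by (rule transpose_eq_iff_entrywise)
    (use Ss P entries in \<open>auto simp: padded_entry_def diag_entry_def\<close>)

lemma left_sym_d_iff:
  "transpose_mat (Ss * Q + Sd * P) = Ss * Q + Sd * P \<longleftrightarrow>
     (\<forall>i<m. \<forall>j<m. a j * q j i + b j * p j i = a i * q i j + b i * p i j)"
  by (rule transpose_eq_iff_entrywise)
    (use Ss Sd P Q entries in \<open>auto simp: padded_entry_def diag_entry_def\<close>)

lemma right_sym_s_iff:
  "transpose_mat (P * Ss) = P * Ss \<longleftrightarrow> (\<forall>i<n. \<forall>j<n. p j i * a i = p i j * a j)"
  by (rule transpose_eq_iff_entrywise)
    (use Ss P entries in \<open>auto simp: padded_entry_def diag_entry_def\<close>)

lemma right_sym_d_iff:
  "transpose_mat (P * Sd + Q * Ss) = P * Sd + Q * Ss \<longleftrightarrow>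
     (\<forall>i<n. \<forall>j<n. p j i * b i + q j i * a i = p i j * b j + q i j * a j)"
  by (rule transpose_eq_iff_entrywise)
    (use Ss Sd P Q entries in \<open>auto simp: padded_entry_def diag_entry_def\<close>)

lemma penrose_eqs_iff_diag_penrose_solution:
  "penrose_eqs m n (Ss, Sd) (app_part m n (Ss, Sd)) (P, Q) \<longleftrightarrow> diag_penrose_solution m n a b p q"
proof -
  have supports: "(\<forall>k. a k \<noteq> 0 \<longrightarrow> k < m \<and> k < n) = True" "(\<forall>k. b k \<noteq> 0 \<longrightarrow> k < m \<and> k < n) = True"
    "(\<forall>i j. p i j \<noteq> 0 \<longrightarrow> i < n \<and> j < m) = True" "(\<forall>i j. q i j \<noteq> 0 \<longrightarrow> i < n \<and> j < m) = True"
    using entry_supports by blast+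
  have "penrose_eqs m n (Ss, Sd) (app_part m n (Ss, Sd)) (P, Q) \<longleftrightarrow>
     (Ss * P * Ss = mat m n (\<lambda>(i, j). Ss $$ (i, j)) \<and>
      Ss * P * Sd + (Ss * Q + Sd * P) * Ss
        = mat m n (\<lambda>(i, j). if Ss $$ (i, j) \<noteq> 0 then Sd $$ (i, j) else 0)) \<and>
     (P * Ss * P = P \<and> P * Ss * Q + (P * Sd + Q * Ss) * P = Q) \<and>
     (transpose_mat (Ss * P) = Ss * P \<and> transpose_mat (Ss * Q + Sd * P) = Ss * Q + Sd * P) \<and>
     (transpose_mat (P * Ss) = P * Ss \<and> transpose_mat (P * Sd + Q * Ss) = P * Sd + Q * Ss)"
    unfolding app_part_def fst_conv snd_conv
    using P Q by (simp add: penrose_eqs_def dmult_def dtrans_def dcarrier_def)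
  also have "\<dots> \<longleftrightarrow> diag_penrose_solution m n a b p q"
    unfolding outer_s_iff outer_d_iff inner_s_iff inner_d_iff left_sym_s_iff left_sym_d_iff
      right_sym_s_iff right_sym_d_iff diag_penrose_solution_def
    by (simp only: supports all_simps simp_thms conj_assoc)
  finally show ?thesis .
qed

lemma eq_app_pinv_iff: "(P, Q) = app_pinv m n (Ss, Sd) \<longleftrightarrow> p = diag_pinv_s a \<and> q = diag_pinv_d a b"
proof -
  have "diag_pinv_s a i j = 0 \<and> diag_pinv_d a b i j = 0" if "\<not> (i < n \<and> j < m)" for i j
    using that diag_entry_nonzeroD[of m n Ss i] by (auto simp: diag_pinv_s_def diag_pinv_d_def)
  then show ?thesis
    using P Q by (auto simp: app_pinv_def mat_eq_iff padded_entry_def fun_eq_iff)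
qed

lemma penrose_eqs_app_part_iff_app_pinv:
  "penrose_eqs m n (Ss, Sd) (app_part m n (Ss, Sd)) (P, Q) \<longleftrightarrow> (P, Q) = app_pinv m n (Ss, Sd)"
  unfolding penrose_eqs_iff_diag_penrose_solution eq_app_pinv_iff
  by (rule diag_penrose_solution_iff[OF entry_supports])

end

definition ddiagonal :: "nat \<Rightarrow> nat \<Rightarrow> dmat \<Rightarrow> bool" where
  "ddiagonal m n S \<longleftrightarrow> S \<in> dcarrier m n \<and> (\<forall>i<m. \<forall>j<n. i \<noteq> j \<longrightarrow> dentry S i j = (0, 0))"

lemma ddiagonal_diag_dual_pair:
  assumes "ddiagonal m n S" "Y \<in> dcarrier n m"
  shows "diag_dual_pair m n (fst S) (snd S) (fst Y) (snd Y)"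
  using assms by unfold_locales (auto simp: ddiagonal_def dcarrier_def dentry_def)

lemma penrose_eqs_app_part_iff:
  assumes "ddiagonal m n S" "Y \<in> dcarrier n m"
  shows "penrose_eqs m n S (app_part m n S) Y \<longleftrightarrow> Y = app_pinv m n S"
  using diag_dual_pair.penrose_eqs_app_part_iff_app_pinv[OF ddiagonal_diag_dual_pair[OF assms]]
  by simp

lemma app_part_carrier: "app_part m n S \<in> dcarrier m n"
  by (simp add: app_part_def dcarrier_def)

lemma app_pinv_carrier: "app_pinv m n S \<in> dcarrier n m"
  by (simp add: app_pinv_def dcarrier_def)

lemma ddiagonal_app_part: "ddiagonal m n S \<Longrightarrow> ddiagonal m n (app_part m n S)"
  by (auto simp: ddiagonal_def app_part_carrier) (auto simp: app_part_def dentry_def)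

lemma app_part_app_part [simp]: "app_part m n (app_part m n S) = app_part m n S"
  by (auto simp: app_part_def)

lemma app_pinv_app_part [simp]: "app_pinv m n (app_part m n S) = app_pinv m n S"
proof -
  have "diag_entry m n (fst (app_part m n S)) = diag_entry m n (fst S)"
    by (auto simp: diag_entry_def app_part_def)
  moreover have "diag_pinv_d (diag_entry m n (fst S)) (diag_entry m n (snd (app_part m n S)))
      = diag_pinv_d (diag_entry m n (fst S)) (diag_entry m n (snd S))"
    by (rule diag_pinv_d_cong) (auto simp: diag_entry_def app_part_def)
  ultimately show ?thesis
    unfolding app_pinv_def by simp
qed

lemma app_part_eq_self:
  assumes "ddiagonal m n S"
    and "\<forall>i<min m n. fst S $$ (i, i) = 0 \<longrightarrow> snd S $$ (i, i) = 0"
  shows "app_part m n S = S"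
proof -
  have "snd (app_part m n S) = snd S"
  proof (rule eq_matI)
    fix i j
    assume "i < dim_row (snd S)" "j < dim_col (snd S)"
    then show "snd (app_part m n S) $$ (i, j) = snd S $$ (i, j)"
      using assms by (cases "i = j") (auto simp: app_part_def ddiagonal_def dcarrier_def dentry_def)
  qed (use assms in \<open>auto simp: app_part_def ddiagonal_def dcarrier_def\<close>)
  moreover have "fst (app_part m n S) = fst S"
    using assms by (auto simp: app_part_def ddiagonal_def dcarrier_def)
  ultimately show ?thesis by (simp add: prod_eq_iff)
qed

lemma ddiagonal_infinitesimal_not_regular:
  assumes S: "ddiagonal m n S" and Y: "Y \<in> dcarrier n m"
    and k: "k < min m n" "fst S $$ (k, k) = 0" "snd S $$ (k, k) \<noteq> 0"
  shows "dmult (dmult S Y) S \<noteq> S"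
proof
  obtain Ss Sd P Q where SY: "S = (Ss, Sd)" "Y = (P, Q)"
    by (metis prod.exhaust)
  interpret diag_dual_pair m n Ss Sd P Q
    using ddiagonal_diag_dual_pair[OF S Y] unfolding SY by simp
  assume "dmult (dmult S Y) S = S"
  then have "(Ss * P * Sd + (Ss * Q + Sd * P) * Ss) $$ (k, k) = Sd $$ (k, k)"
    unfolding SY by (simp add: dmult_def)
  moreover have "diag_entry m n Ss k = 0"
    using k SY by (simp add: diag_entry_def)
  ultimately show False
    using diag_entries_SYS(2)[of k k] k SY by simp
qed

lemma dsvdD:
  assumes "dsvd m n A U S V"
  shows "dorthogonal m U" "dorthogonal n V" "ddiagonal m n S" "A = dmult (dmult U S) (dtrans V)"
  using assms by (auto simp: dsvd_def ddiagonal_def)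

lemma dsvd_infinitesimal_no_DMPGI:
  assumes svd: "dsvd m n A U S V"
    and k: "k < min m n" "fst S $$ (k, k) = 0" "snd S $$ (k, k) \<noteq> 0"
  shows "\<not> is_DMPGI m n A X"
proof
  note U = dsvdD(1)[OF svd] and V = dsvdD(2)[OF svd] and S = dsvdD(3)[OF svd]
  have Sc: "S \<in> dcarrier m n" using S by (simp add: ddiagonal_def)
  assume "is_DMPGI m n A X"
  moreover from this have "X \<in> dcarrier n m"
    by (simp add: is_DMPGI_def)
  ultimately have "penrose_eqs m n S S (dmult (dmult (dtrans V) X) U)"
    using penrose_eqs_dorth_equiv[OF U V Sc Sc] by (simp add: is_DMPGI_iff_penrose_eqs dsvdD(4)[OF svd])
  then show False
    using ddiagonal_infinitesimal_not_regular[where Y = "dmult (dmult (dtrans V) X) U", OF S _ k]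
    by (simp add: penrose_eqs_def)
qed

theorem theorem5p2:
  fixes m n :: nat and A U S V :: dmat
  assumes "dsvd m n A U S V"
  defines "Ae \<equiv> ess_part m n U S V"
  shows "(\<exists>X. is_DMPGI m n Ae X) \<and>
         (\<forall>X. is_GMPI m n A Ae X \<longleftrightarrow> is_DMPGI m n Ae X) \<and>
         ((\<forall>i<min m n. fst S $$ (i, i) = 0 \<longrightarrow> snd S $$ (i, i) = 0) \<longrightarrow>
            (\<exists>X. is_DMPGI m n A X) \<and> (\<forall>X. is_DMPGI m n A X \<longleftrightarrow> is_GMPI m n A Ae X)) \<and>
         (\<not> (\<forall>i<min m n. fst S $$ (i, i) = 0 \<longrightarrow> snd S $$ (i, i) = 0) \<longrightarrow>
            \<not> (\<exists>X. is_DMPGI m n A X))"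
proof -
  note U = dsvdD(1)[OF assms(1)] and V = dsvdD(2)[OF assms(1)] and S = dsvdD(3)[OF assms(1)]
    and A = dsvdD(4)[OF assms(1)]
  have Ae: "Ae = dmult (dmult U (app_part m n S)) (dtrans V)"
    by (simp add: Ae_def ess_part_def)
  define X0 where "X0 = dmult (dmult V (app_pinv m n S)) (dtrans U)"
  have "is_GMPI m n A Ae X \<longleftrightarrow> X = X0" for X
    unfolding is_GMPI_iff_penrose_eqs A Ae X0_def
    using S by (intro penrose_eqs_dorth_equiv_unique[OF U V] penrose_eqs_app_part_iff)
      (auto simp: ddiagonal_def app_part_carrier app_pinv_carrier)
  moreover have "is_DMPGI m n Ae X \<longleftrightarrow> X = X0" for X
    using penrose_eqs_dorth_equiv_unique[OF U V app_part_carrier app_part_carrier app_pinv_carrier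
        penrose_eqs_app_part_iff[OF ddiagonal_app_part[OF S]]]
    by (simp add: is_DMPGI_iff_penrose_eqs Ae X0_def)
  moreover have "Ae = A" if "\<forall>i<min m n. fst S $$ (i, i) = 0 \<longrightarrow> snd S $$ (i, i) = 0"
    using app_part_eq_self[OF S that] by (simp add: A Ae)
  moreover have "\<not> is_DMPGI m n A X"
    if "\<not> (\<forall>i<min m n. fst S $$ (i, i) = 0 \<longrightarrow> snd S $$ (i, i) = 0)" for X
    using that dsvd_infinitesimal_no_DMPGI[OF assms(1)] by blast
  ultimately show ?thesis
    by blast
qed

end
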